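(* Let $L>0,\alpha>0$ and let $\{b_n\}\subset\Lambda(\alpha)$ converge weak-$*$ to some $\bar b\in\overline{\Lambda}(\alpha)$. Let $\eta$ be a continuous function on $\mathbb R$ with $\sum_{k=-\infty}^{\infty}\max_{0\le x\le L}|\eta(x+kL)|<\infty$. Then $\eta$ is $\bar b$-integrable on $\mathbb R$, $\lim_{n\to\infty}\int_{\mathbb R}b_n(x)\eta(x)dx=\int_{\mathbb R}\bar b(x)\eta(x)dx$, and $\int_{\mathbb R}\bar b(x)|\eta(x)|dx\le\alpha L\sum_{k=-\infty}^\infty\max_{0\le x\le L}|\eta(x+kL)|$.
   Context: $\Lambda(\alpha)$: $b\in C^1(\mathbb R)$, $b\ge0$, $b(x+L)=b(x)$, $\int_0^Lb=\alpha L$. $b_n\to\bar b$ weak-$*$ means $\int b_n\eta\,dx\to\langle\bar b,\eta\rangle$ for all $\eta\in C_0^\infty(\mathbb R)$; $\overline{\Lambda}(\alpha)$ is the set of such limits, which are nonnegative Borel measures, and $\int\bar b(x)\eta(x)dx$ denotes $\int\eta\,d\bar b$. *)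

theory Defs
  imports "HOL-Analysis.Analysis"
begin

definition C1_fun :: "(real \<Rightarrow> real) \<Rightarrow> bool" where
  "C1_fun b \<longleftrightarrow> (\<exists>b'. continuous_on UNIV b' \<and> (\<forall>x. (b has_real_derivative b' x) (at x)))"

definition Lambda :: "real \<Rightarrow> real \<Rightarrow> (real \<Rightarrow> real) set" where
  "Lambda L \<alpha> = {b. C1_fun b \<and> (\<forall>x. 0 \<le> b x) \<and> (\<forall>x. b (x + L) = b x)
                      \<and> integral {0..L} b = \<alpha> * L}"

definition test_fun :: "(real \<Rightarrow> real) \<Rightarrow> bool" where
  "test_fun \<eta> \<longleftrightarrow> (\<forall>k x. ((deriv ^^ k) \<eta>) differentiable (at x))
                     \<and> (\<exists>a c. \<forall>x. x \<notin> {a..c} \<longrightarrow> \<eta> x = 0)"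

definition weak_star_conv :: "(nat \<Rightarrow> real \<Rightarrow> real) \<Rightarrow> real measure \<Rightarrow> bool" where
  "weak_star_conv b M \<longleftrightarrow>
     (\<forall>\<eta>. test_fun \<eta> \<longrightarrow> integrable M \<eta> \<and>
        (\<lambda>n. LINT x|lborel. b n x * \<eta> x) \<longlonglongrightarrow> (LINT x|M. \<eta> x))"

definition Lambda_bar :: "real \<Rightarrow> real \<Rightarrow> real measure set" where
  "Lambda_bar L \<alpha> = {M. sets M = sets borel \<and>
      (\<exists>b. (\<forall>n. b n \<in> Lambda L \<alpha>) \<and> weak_star_conv b M)}"

end

theory Submission
  imports Defs
begin

text \<open>Each b_n is nonnegative and L-periodic with mean \<alpha>, so its mass on a period
  [kL, kL + L] is \<alpha>L and the integral of b_n |\<eta>| over that period is at most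
  \<alpha>L max |\<eta>|; summing over k bounds the integral of b_n |\<eta>| uniformly in n, and the
  same bound for the periods outside [-NL, NL] is small for large N.
  Weak-* convergence is only assumed on smooth test functions; it extends to continuous
  compactly supported g by approximating g uniformly relative to a bump \<psi>
  (Stone--Weierstrass applied to g / \<psi>). Cutting \<eta> off outside [-NL, NL] then yields the
  bound on the limit measure by Fatou's lemma, and the uniform tail bounds on both
  sides let N tend to infinity.\<close>

section \<open>Smooth functions and bumps\<close>

definition smooth :: "(real \<Rightarrow> real) \<Rightarrow> bool" where
  "smooth f \<longleftrightarrow> (\<forall>k x. (deriv ^^ k) f differentiable (at x))"

lemma smooth_coinduct:
  assumes "P f" and step: "\<And>g. P g \<Longrightarrow> (\<forall>x. g differentiable (at x)) \<and> P (deriv g)"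
  shows "smooth f"
proof -
  have "\<forall>g. P g \<longrightarrow> (deriv ^^ k) g differentiable (at x)" for k x
  proof (induction k)
    case 0
    then show ?case using step by simp
  next
    case (Suc k)
    show ?case
      using Suc step by (simp only: funpow_Suc_right comp_apply) blast
  qed
  then show ?thesis using assms(1) unfolding smooth_def by blast
qed

lemma smooth_differentiable: "smooth f \<Longrightarrow> f differentiable (at x)"
  unfolding smooth_def by (metis funpow_0)

lemma smooth_deriv: "smooth f \<Longrightarrow> smooth (deriv f)"
  unfolding smooth_def by (metis comp_apply funpow_Suc_right)

lemma smooth_has_real_derivative: "smooth f \<Longrightarrow> (f has_real_derivative deriv f x) (at x)"
  using smooth_differentiable DERIV_deriv_iff_real_differentiable by blast

lemma smooth_imp_continuous_on: "smooth f \<Longrightarrow> continuous_on S f"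
  by (simp add: continuous_at_imp_continuous_on differentiable_imp_continuous_within
      smooth_differentiable)

text \<open>Products are handled through finite sums of products, a class that is closed under
  differentiation.\<close>

definition sum_of_products :: "((real \<Rightarrow> real) \<times> (real \<Rightarrow> real)) list \<Rightarrow> real \<Rightarrow> real" where
  "sum_of_products ps = (\<lambda>x. \<Sum>(f, g)\<leftarrow>ps. f x * g x)"

definition deriv_pairs ::
  "((real \<Rightarrow> real) \<times> (real \<Rightarrow> real)) list \<Rightarrow> ((real \<Rightarrow> real) \<times> (real \<Rightarrow> real)) list" where
  "deriv_pairs ps = concat (map (\<lambda>(f, g). [(deriv f, g), (f, deriv g)]) ps)"

lemma sum_of_products_has_real_derivative:
  assumes "\<forall>(f, g)\<in>set ps. smooth f \<and> smooth g"
  shows "(sum_of_products ps has_real_derivative sum_of_products (deriv_pairs ps) x) (at x)"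
  using assms
proof (induction ps)
  case Nil
  then show ?case by (simp add: sum_of_products_def deriv_pairs_def)
next
  case (Cons fg ps)
  obtain f g where fg: "fg = (f, g)" by (cases fg)
  have "smooth f" "smooth g" using Cons.prems fg by auto
  then have "((\<lambda>x. f x * g x + sum_of_products ps x) has_real_derivative
      deriv f x * g x + f x * deriv g x + sum_of_products (deriv_pairs ps) x) (at x)"
    using Cons by (auto intro!: derivative_eq_intros smooth_has_real_derivative)
  then show ?case by (simp add: sum_of_products_def deriv_pairs_def fg algebra_simps)
qed

lemma smooth_sum_of_products:
  "\<forall>(f, g)\<in>set ps. smooth f \<and> smooth g \<Longrightarrow> smooth (sum_of_products ps)"
proof (rule smooth_coinduct[where P = "\<lambda>h. \<exists>ps. (\<forall>(f, g)\<in>set ps. smooth f \<and> smooth g)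
                                              \<and> h = sum_of_products ps"])
  fix h assume "\<exists>ps. (\<forall>(f, g)\<in>set ps. smooth f \<and> smooth g) \<and> h = sum_of_products ps"
  then obtain ps where ps: "\<forall>(f, g)\<in>set ps. smooth f \<and> smooth g" "h = sum_of_products ps"
    by blast
  note D = sum_of_products_has_real_derivative[OF ps(1)]
  have "deriv h = sum_of_products (deriv_pairs ps)" using D ps(2) DERIV_imp_deriv by blast
  moreover have "\<forall>(f, g)\<in>set (deriv_pairs ps). smooth f \<and> smooth g"
    using ps(1) by (auto simp: deriv_pairs_def smooth_deriv)
  ultimately show "(\<forall>x. h differentiable (at x)) \<and>
      (\<exists>ps. (\<forall>(f, g)\<in>set ps. smooth f \<and> smooth g) \<and> deriv h = sum_of_products ps)"
    using D ps(2) real_differentiable_def by blast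
qed auto

lemma smooth_mult: "smooth f \<Longrightarrow> smooth g \<Longrightarrow> smooth (\<lambda>x. f x * g x)"
  using smooth_sum_of_products[of "[(f, g)]"] by (simp add: sum_of_products_def)

lemma smooth_polynomial_function: "real_polynomial_function p \<Longrightarrow> smooth p"
proof (rule smooth_coinduct[where P = real_polynomial_function])
  fix g :: "real \<Rightarrow> real" assume "real_polynomial_function g"
  then obtain g' where g': "real_polynomial_function g'" "\<And>x. (g has_real_derivative g' x) (at x)"
    using has_real_derivative_polynomial_function by blast
  then have "deriv g = g'" using DERIV_imp_deriv by blast
  then show "(\<forall>x. g differentiable (at x)) \<and> real_polynomial_function (deriv g)"
    using g' real_differentiable_def by blast
qed

lemma smooth_affine_compose: "smooth f \<Longrightarrow> smooth (\<lambda>x. f (a * x + c))"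
proof (rule smooth_coinduct[where P = "\<lambda>h. \<exists>f d. smooth f \<and> h = (\<lambda>x. d * f (a * x + c))"])
  fix h assume "\<exists>f d. smooth f \<and> h = (\<lambda>x. d * f (a * x + c))"
  then obtain f d where fd: "smooth f" "h = (\<lambda>x. d * f (a * x + c))" by blast
  have D: "(h has_real_derivative (d * a) * deriv f (a * x + c)) (at x)" for x
    unfolding fd(2)
    by (rule derivative_eq_intros DERIV_chain2[OF smooth_has_real_derivative[OF fd(1)]] | simp)+
  then have "deriv h = (\<lambda>x. (d * a) * deriv f (a * x + c))" using DERIV_imp_deriv by blast
  then show "(\<forall>x. h differentiable (at x)) \<and>
      (\<exists>f d. smooth f \<and> deriv h = (\<lambda>x. d * f (a * x + c)))"
    using D real_differentiable_def smooth_deriv[OF fd(1)] by blast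
next
  assume "smooth f"
  then show "\<exists>g d. smooth g \<and> (\<lambda>x. f (a * x + c)) = (\<lambda>x. d * g (a * x + c))"
    by (intro exI[of _ f] exI[of _ 1]) auto
qed

lemma polynomial_function_div_exp_tendsto_0:
  assumes "real_polynomial_function p" and "e > 0"
  shows "((\<lambda>t. p t / exp (e * t)) \<longlongrightarrow> 0) at_top"
  using assms
proof (induction p arbitrary: e rule: real_polynomial_function.induct)
  case (linear f)
  then obtain c where f: "f = (\<lambda>x. x * c)" using real_bounded_linear by blast
  have "filterlim (\<lambda>t. e * t) at_top at_top"
    using linear.prems by (intro filterlim_tendsto_pos_mult_at_top[OF tendsto_const] filterlim_ident)
  then have "((\<lambda>t. (e * t) ^ 1 / exp (e * t)) \<longlongrightarrow> 0) at_top"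
    by (rule filterlim_compose[OF tendsto_power_div_exp_0])
  then have "((\<lambda>t. c / e * ((e * t) ^ 1 / exp (e * t))) \<longlongrightarrow> c / e * 0) at_top"
    by (intro tendsto_mult tendsto_const)
  then show ?case using linear.prems by (simp add: f mult.commute)
next
  case (const c)
  have "filterlim (\<lambda>t. e * t) at_top at_top"
    using const by (intro filterlim_tendsto_pos_mult_at_top[OF tendsto_const] filterlim_ident)
  then have "filterlim (\<lambda>t. exp (e * t)) at_top at_top"
    by (rule filterlim_compose[OF exp_at_top])
  then show ?case
    by (intro tendsto_divide_0[OF tendsto_const] filterlim_at_top_imp_at_infinity)
next
  case (add f g)
  then have "((\<lambda>t. f t / exp (e * t) + g t / exp (e * t)) \<longlongrightarrow> 0 + 0) at_top"
    by (intro tendsto_add) auto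
  then show ?case by (simp add: add_divide_distrib)
next
  case (mult f g)
  have "((\<lambda>t. f t / exp (e/2 * t) * (g t / exp (e/2 * t))) \<longlongrightarrow> 0 * 0) at_top"
    using mult.IH[of "e/2"] mult.prems by (intro tendsto_mult) simp_all
  moreover have "exp (e * t) = exp (e/2 * t) * exp (e/2 * t)" for t
    by (simp flip: exp_add)
  ultimately show ?case by simp
qed

text \<open>Every derivative of such a function is again of this form, with a new polynomial;
  at 0 they are all flat.\<close>

definition flat_exp :: "(real \<Rightarrow> real) \<Rightarrow> real \<Rightarrow> real" where
  "flat_exp p x = (if x > 0 then p (inverse x) * exp (- inverse x) else 0)"

lemma flat_exp_has_real_derivative:
  assumes p: "real_polynomial_function p" and p': "\<And>t. (p has_real_derivative p' t) (at t)"
  shows "(flat_exp p has_real_derivative flat_exp (\<lambda>t. t * t * (p t - p' t)) x) (at x)"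
proof -
  consider "x > 0" | "x < 0" | "x = 0" by linarith
  then show ?thesis
  proof cases
    case 1
    have "((\<lambda>y. p (inverse y) * exp (- inverse y)) has_real_derivative
        flat_exp (\<lambda>t. t * t * (p t - p' t)) x) (at x)"
      using 1 by (auto intro!: derivative_eq_intros DERIV_chain2[OF p']
          simp: flat_exp_def algebra_simps power2_eq_square)
    then show ?thesis
      by (rule has_field_derivative_transform_within_open[of _ _ _ "{0<..}"])
         (use 1 in \<open>auto simp: flat_exp_def\<close>)
  next
    case 2
    have "((\<lambda>y. 0) has_real_derivative 0) (at x)" by simp
    then have "(flat_exp p has_real_derivative 0) (at x)"
      by (rule has_field_derivative_transform_within_open[of _ _ _ "{..<0}"])
         (use 2 in \<open>auto simp: flat_exp_def\<close>)
    then show ?thesis using 2 by (simp add: flat_exp_def)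
  next
    case 3
    have "((\<lambda>t. t * p t / exp (1 * t)) \<longlongrightarrow> 0) at_top"
      using p by (intro polynomial_function_div_exp_tendsto_0 real_polynomial_function.intros(4)
          real_polynomial_function.intros(1)[OF bounded_linear_ident]) simp_all
    then have "((\<lambda>y. inverse y * p (inverse y) / exp (1 * inverse y)) \<longlongrightarrow> 0) (at_right 0)"
      by (rule filterlim_compose[OF _ filterlim_inverse_at_top_right])
    then have right: "((\<lambda>y. (flat_exp p y - flat_exp p 0) / (y - 0)) \<longlongrightarrow> 0) (at_right 0)"
      by (rule Lim_transform_eventually)
         (auto simp: eventually_at_filter flat_exp_def exp_minus field_simps)
    have left: "((\<lambda>y. (flat_exp p y - flat_exp p 0) / (y - 0)) \<longlongrightarrow> 0) (at_left 0)"
      by (rule Lim_transform_eventually[OF tendsto_const])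
         (auto simp: eventually_at_filter flat_exp_def)
    have "(flat_exp p has_real_derivative 0) (at 0)"
      unfolding has_field_derivative_iff by (rule filterlim_split_at[OF left right])
    then show ?thesis using 3 by (simp add: flat_exp_def)
  qed
qed

lemma smooth_flat_exp: "real_polynomial_function p \<Longrightarrow> smooth (flat_exp p)"
proof (rule smooth_coinduct[where P = "\<lambda>g. \<exists>p. real_polynomial_function p \<and> g = flat_exp p"])
  fix g assume "\<exists>p. real_polynomial_function p \<and> g = flat_exp p"
  then obtain p where p: "real_polynomial_function p" "g = flat_exp p" by blast
  then obtain p' where p': "real_polynomial_function p'" "\<And>x. (p has_real_derivative p' x) (at x)"
    using has_real_derivative_polynomial_function by blast
  note D = flat_exp_has_real_derivative[OF p(1) p'(2)]
  then have "deriv g = flat_exp (\<lambda>t. t * t * (p t - p' t))"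
    using p(2) DERIV_imp_deriv by blast
  moreover have "real_polynomial_function (\<lambda>t. t * t * (p t - p' t))"
    using p(1) p'(1) by (intro real_polynomial_function.intros(4) real_polynomial_function_diff
        real_polynomial_function.intros(1)[OF bounded_linear_ident])
  ultimately show "(\<forall>x. g differentiable (at x)) \<and>
      (\<exists>p. real_polynomial_function p \<and> deriv g = flat_exp p)"
    using D p(2) real_differentiable_def by blast
qed auto

definition bump :: "real \<Rightarrow> real \<Rightarrow> real" where
  "bump R x = flat_exp (\<lambda>_. 1) (R + x) * flat_exp (\<lambda>_. 1) (R - x)"

lemma smooth_bump: "smooth (bump R)"
proof -
  have "smooth (\<lambda>x. flat_exp (\<lambda>_. 1) (1 * x + R))" "smooth (\<lambda>x. flat_exp (\<lambda>_. 1) ((-1) * x + R))"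
    by (intro smooth_affine_compose smooth_flat_exp real_polynomial_function.intros(2))+
  moreover have "bump R = (\<lambda>x. flat_exp (\<lambda>_. 1) (1 * x + R) * flat_exp (\<lambda>_. 1) ((-1) * x + R))"
    by (simp add: bump_def fun_eq_iff add.commute)
  ultimately show ?thesis by (simp add: smooth_mult)
qed

lemma bump_nonneg: "bump R x \<ge> 0"
  by (simp add: bump_def flat_exp_def)

lemma bump_pos_iff: "bump R x > 0 \<longleftrightarrow> \<bar>x\<bar> < R"
proof -
  have "bump R x = (if 0 < R + x \<and> 0 < R - x
      then exp (- inverse (R + x)) * exp (- inverse (R - x)) else 0)"
    by (simp add: bump_def flat_exp_def)
  then show ?thesis by auto
qed

lemma bump_eq_0: "R \<le> \<bar>x\<bar> \<Longrightarrow> bump R x = 0"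
  by (auto simp: bump_def flat_exp_def)

lemma test_funI:
  assumes "smooth f" and "\<And>x. R < \<bar>x\<bar> \<Longrightarrow> f x = 0"
  shows "test_fun f"
proof -
  have "\<forall>x. x \<notin> {-R..R} \<longrightarrow> f x = 0" using assms(2) by auto
  then show ?thesis using assms(1) unfolding test_fun_def smooth_def by blast
qed

lemma test_fun_bump: "test_fun (bump R)"
  using smooth_bump bump_eq_0 by (intro test_funI[of _ R]) auto

lemma test_fun_continuous: "test_fun f \<Longrightarrow> continuous_on S f"
  unfolding test_fun_def
  by (metis funpow_0 continuous_at_imp_continuous_on differentiable_imp_continuous_within)

lemma test_fun_vanishes:
  assumes "test_fun f"
  obtains R where "\<And>x. R < \<bar>x\<bar> \<Longrightarrow> f x = 0"
proof -
  obtain a c where "\<forall>x. x \<notin> {a..c} \<longrightarrow> f x = 0" using assms unfolding test_fun_def by blast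
  then have "f x = 0" if "max \<bar>a\<bar> \<bar>c\<bar> < \<bar>x\<bar>" for x
    using that by (auto simp: abs_if split: if_splits)
  then show ?thesis using that by blast
qed

text \<open>A continuous function supported in [-R, R] is approximated by the test functions
  p * bump (R + 1) with p polynomial, obtained by Stone--Weierstrass applied to g / bump (R + 1).\<close>

lemma test_fun_approximation:
  assumes g: "continuous_on UNIV g" and g0: "\<And>x. R < \<bar>x\<bar> \<Longrightarrow> g x = 0" and e: "e > 0"
  obtains \<phi> where "test_fun \<phi>" and "\<And>x. \<bar>g x - \<phi> x\<bar> \<le> e * bump (R + 1) x"
proof -
  define \<psi> where "\<psi> = bump (R + 1)"
  define q where "q x = (if \<bar>x\<bar> < R + 1 then g x / \<psi> x else 0)" for x
  have "continuous_on ({x. \<bar>x\<bar> < R + 1} \<union> {x. R < \<bar>x\<bar>}) q"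
  proof (rule continuous_on_open_Un)
    have "continuous_on {x. \<bar>x\<bar> < R + 1} (\<lambda>x. g x / \<psi> x)"
      using bump_pos_iff[of "R + 1"] unfolding \<psi>_def
      by (intro continuous_on_divide continuous_on_subset[OF g] smooth_imp_continuous_on
          smooth_bump) force+
    then show "continuous_on {x. \<bar>x\<bar> < R + 1} q"
      by (rule continuous_on_cong[THEN iffD1, rotated 2]) (auto simp: q_def)
    show "continuous_on {x. R < \<bar>x\<bar>} q"
      by (rule continuous_on_cong[THEN iffD1, OF refl _ continuous_on_const]) (auto simp: q_def g0)
  qed (intro open_Collect_less continuous_intros)+
  moreover have "{x. \<bar>x\<bar> < R + 1} \<union> {x. R < \<bar>x\<bar>} = UNIV" by auto
  ultimately have "continuous_on {-(R + 1)..R + 1} q" by (auto intro: continuous_on_subset)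
  then obtain p where p: "real_polynomial_function p"
    and pq: "\<And>x. x \<in> {-(R + 1)..R + 1} \<Longrightarrow> \<bar>q x - p x\<bar> < e"
    using Stone_Weierstrass_real_polynomial_function[of "{-(R + 1)..R + 1}" q e] e by auto
  show ?thesis
  proof
    show "test_fun (\<lambda>x. p x * \<psi> x)"
      using p bump_eq_0 unfolding \<psi>_def
      by (intro test_funI[of _ "R + 1"] smooth_mult smooth_polynomial_function smooth_bump) auto
    fix x
    show "\<bar>g x - p x * \<psi> x\<bar> \<le> e * bump (R + 1) x"
    proof (cases "\<bar>x\<bar> < R + 1")
      case True
      then have "\<psi> x > 0" by (simp add: \<psi>_def bump_pos_iff)
      then have "g x - p x * \<psi> x = (q x - p x) * \<psi> x"
        using True by (simp add: q_def field_simps)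
      then have "\<bar>g x - p x * \<psi> x\<bar> = \<bar>q x - p x\<bar> * \<psi> x"
        using \<open>\<psi> x > 0\<close> by (simp add: abs_mult)
      also have "\<dots> \<le> e * \<psi> x"
        using pq[of x] True \<open>\<psi> x > 0\<close> by (intro mult_right_mono) (auto simp: abs_less_iff)
      finally show ?thesis by (simp add: \<psi>_def)
    next
      case False
      then show ?thesis by (simp add: \<psi>_def bump_eq_0 g0)
    qed
  qed
qed

lemma LIMSEQ_of_approximations:
  fixes a :: "nat \<Rightarrow> real"
  assumes approx_lim: "\<And>N. (\<lambda>n. a' N n) \<longlonglongrightarrow> c' N"
    and approx_a: "\<And>N. eventually (\<lambda>n. \<bar>a n - a' N n\<bar> \<le> e N) sequentially"
    and approx_c: "\<And>N. \<bar>c - c' N\<bar> \<le> e N"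
    and "e \<longlonglongrightarrow> 0"
  shows "a \<longlonglongrightarrow> c"
proof (rule tendstoI)
  fix r :: real assume "r > 0"
  then obtain N where N: "e N < r / 3"
    using order_tendstoD(2)[OF \<open>e \<longlonglongrightarrow> 0\<close>, of "r / 3"] by (auto simp: eventually_sequentially)
  have "eventually (\<lambda>n. dist (a' N n) (c' N) < r / 3) sequentially"
    using \<open>r > 0\<close> by (intro tendstoD[OF approx_lim]) simp
  with approx_a[of N] show "eventually (\<lambda>n. dist (a n) c < r) sequentially"
  proof eventually_elim
    case (elim n)
    then have "\<bar>a n - a' N n\<bar> \<le> e N" "\<bar>a' N n - c' N\<bar> < r / 3" "\<bar>c - c' N\<bar> \<le> e N"
      using approx_c[of N] by (simp_all add: dist_real_def)
    then show ?case using N unfolding dist_real_def abs_le_iff abs_less_iff by linarith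
  qed
qed

lemma nn_integral_le_of_eventually_eq:
  fixes F :: "nat \<Rightarrow> 'a \<Rightarrow> ennreal"
  assumes "\<And>N. F N \<in> borel_measurable M"
    and "\<And>x. eventually (\<lambda>N. F N x = f x) sequentially"
    and "\<And>N. (\<integral>\<^sup>+x. F N x \<partial>M) \<le> C"
  shows "(\<integral>\<^sup>+x. f x \<partial>M) \<le> C"
proof -
  have "f x = liminf (\<lambda>N. F N x)" for x
    using assms(2) by (intro lim_imp_Liminf[symmetric] tendsto_eventually) auto
  then have "(\<integral>\<^sup>+x. f x \<partial>M) = (\<integral>\<^sup>+x. liminf (\<lambda>N. F N x) \<partial>M)" by simp
  also have "\<dots> \<le> liminf (\<lambda>N. \<integral>\<^sup>+x. F N x \<partial>M)" by (rule nn_integral_liminf[OF assms(1)])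
  also have "\<dots> \<le> C" by (intro Liminf_le) (auto simp: assms(3))
  finally show ?thesis .
qed

lemma abs_integral_diff_le:
  fixes f g w :: "'a \<Rightarrow> real"
  assumes "integrable M f" "integrable M g" "integrable M w" and "\<And>x. \<bar>f x - g x\<bar> \<le> w x"
  shows "\<bar>integral\<^sup>L M f - integral\<^sup>L M g\<bar> \<le> integral\<^sup>L M w"
proof -
  have "integral\<^sup>L M f - integral\<^sup>L M g = (\<integral>x. f x - g x \<partial>M)"
    by (rule Bochner_Integration.integral_diff[OF assms(1,2), symmetric])
  also have "\<bar>\<dots>\<bar> \<le> (\<integral>x. \<bar>f x - g x\<bar> \<partial>M)" by (rule integral_abs_bound)
  also have "\<dots> \<le> integral\<^sup>L M w" using assms by (intro integral_mono) auto
  finally show ?thesis .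
qed

lemma integrable_compact_support:
  fixes g :: "real \<Rightarrow> real"
  assumes "continuous_on UNIV g" and "\<And>x. R < \<bar>x\<bar> \<Longrightarrow> g x = 0"
  shows "integrable lborel g"
proof -
  have "integrable lborel (\<lambda>x. indicator {-R..R} x *\<^sub>R g x)"
    using assms(1) by (intro borel_integrable_compact) (auto intro: continuous_on_subset)
  moreover have "(\<lambda>x. indicator {-R..R} x *\<^sub>R g x) = g"
  proof
    fix x
    show "indicator {-R..R} x *\<^sub>R g x = g x"
      using assms(2)[of x] by (cases "x \<in> {-R..R}") auto
  qed
  ultimately show ?thesis by simp
qed

lemma eventually_abs_less_real_mult:
  assumes "L > 0"
  shows "eventually (\<lambda>N. \<bar>x\<bar> < real N * L) sequentially"
proof -
  obtain N0 :: nat where "\<bar>x\<bar> / L < real N0" using reals_Archimedean2 by blast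
  then have "\<bar>x\<bar> < real N * L" if "N \<ge> N0" for N
    using that assms by (simp add: pos_divide_less_eq) (smt (verit) mult_right_mono of_nat_mono)
  then show ?thesis unfolding eventually_sequentially by blast
qed

lemma filterlim_int_symmetric_intervals:
  "filterlim (\<lambda>N::nat. {-int N..<int N}) (finite_subsets_at_top UNIV) sequentially"
  unfolding filterlim_finite_subsets_at_top
proof (intro allI impI)
  fix X :: "int set" assume "finite X \<and> X \<subseteq> UNIV"
  then obtain u where u: "\<forall>x\<in>X. \<bar>x\<bar> \<le> u"
    using bdd_above_finite[of "abs ` X"] unfolding bdd_above_def by auto
  show "\<forall>\<^sub>F N in sequentially. finite {-int N..<int N} \<and> X \<subseteq> {-int N..<int N} \<and> {-int N..<int N} \<subseteq> UNIV"
    unfolding eventually_sequentially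
  proof (intro exI[of _ "nat u + 1"] allI impI)
    fix N assume "nat u + 1 \<le> N"
    then show "finite {-int N..<int N} \<and> X \<subseteq> {-int N..<int N} \<and> {-int N..<int N} \<subseteq> UNIV"
      using u by force
  qed
qed

section \<open>Period maxima\<close>

definition period_max :: "real \<Rightarrow> (real \<Rightarrow> real) \<Rightarrow> int \<Rightarrow> real" where
  "period_max L f k = Sup ((\<lambda>x. \<bar>f (x + real_of_int k * L)\<bar>) ` {0..L})"

lemma bdd_above_period_image:
  fixes f :: "real \<Rightarrow> real"
  assumes "continuous_on UNIV f"
  shows "bdd_above ((\<lambda>x. \<bar>f (x + real_of_int k * L)\<bar>) ` {0..L})"
proof -
  have "continuous_on {0..L} (\<lambda>x. \<bar>f (x + real_of_int k * L)\<bar>)"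
    by (intro continuous_on_rabs continuous_on_compose2[OF assms] continuous_intros) auto
  then show ?thesis
    by (intro bounded_imp_bdd_above compact_imp_bounded compact_continuous_image) auto
qed

lemma abs_le_period_max:
  assumes "continuous_on UNIV f" and "x \<in> {real_of_int k * L .. real_of_int k * L + L}"
  shows "\<bar>f x\<bar> \<le> period_max L f k"
proof -
  have "x - real_of_int k * L \<in> {0..L}" using assms(2) by auto
  then have "\<bar>f ((x - real_of_int k * L) + real_of_int k * L)\<bar> \<le> period_max L f k"
    unfolding period_max_def by (intro cSup_upper imageI bdd_above_period_image assms(1))
  then show ?thesis by simp
qed

lemma period_max_nonneg: "continuous_on UNIV f \<Longrightarrow> L \<ge> 0 \<Longrightarrow> period_max L f k \<ge> 0"
  using abs_le_period_max[of f "real_of_int k * L" k L] by fastforce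

lemma period_max_mono:
  assumes "continuous_on UNIV f" and "\<And>x. \<bar>g x\<bar> \<le> \<bar>f x\<bar>" and "L \<ge> 0"
  shows "period_max L g k \<le> period_max L f k"
  unfolding period_max_def
  using assms by (intro cSUP_mono bdd_above_period_image) fastforce+

lemma period_max_eq_0:
  assumes "\<And>x. x \<in> {real_of_int k * L .. real_of_int k * L + L} \<Longrightarrow> g x = 0" and "L \<ge> 0"
  shows "period_max L g k = 0"
proof -
  have "(\<lambda>x. \<bar>g (x + real_of_int k * L)\<bar>) ` {0..L} = {0}" using assms by auto
  then show ?thesis by (simp add: period_max_def)
qed

lemma summable_period_max_mono:
  assumes "continuous_on UNIV f" "continuous_on UNIV g" and "\<And>x. \<bar>g x\<bar> \<le> \<bar>f x\<bar>" and "L \<ge> 0"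
    and "period_max L f summable_on UNIV"
  shows "period_max L g summable_on UNIV"
    and "(\<Sum>\<^sub>\<infinity>k. period_max L g k) \<le> (\<Sum>\<^sub>\<infinity>k. period_max L f k)"
proof -
  show g: "period_max L g summable_on UNIV"
    using assms by (intro summable_on_comparison_test[OF assms(5)] period_max_mono period_max_nonneg)
  show "(\<Sum>\<^sub>\<infinity>k. period_max L g k) \<le> (\<Sum>\<^sub>\<infinity>k. period_max L f k)"
    using assms by (intro infsum_mono[OF g assms(5)] period_max_mono)
qed

definition cutoff :: "real \<Rightarrow> real \<Rightarrow> real" where
  "cutoff r x = max 0 (min 1 (r + 1 - \<bar>x\<bar>))"

lemma continuous_on_cutoff [continuous_intros]: "continuous_on S (cutoff r)"
  unfolding cutoff_def[abs_def] by (intro continuous_intros)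

lemma cutoff_nonneg: "cutoff r x \<ge> 0" and cutoff_le_1: "cutoff r x \<le> 1"
  by (auto simp: cutoff_def)

lemma cutoff_eq_1: "\<bar>x\<bar> \<le> r \<Longrightarrow> cutoff r x = 1"
  and cutoff_eq_0: "r + 1 \<le> \<bar>x\<bar> \<Longrightarrow> cutoff r x = 0"
  by (auto simp: cutoff_def)

lemma abs_mult_cutoff_le: "\<bar>f x * cutoff r x\<bar> \<le> \<bar>f x\<bar>"
  and abs_mult_one_minus_cutoff_le: "\<bar>f x * (1 - cutoff r x)\<bar> \<le> \<bar>f x\<bar>"
  using cutoff_nonneg[of r x] cutoff_le_1[of r x] by (simp_all add: abs_mult mult_left_le)

lemma period_max_one_minus_cutoff_eq_0:
  assumes "L \<ge> 0" and "k \<in> {-int N..<int N}"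
  shows "period_max L (\<lambda>x. f x * (1 - cutoff (real N * L) x)) k = 0"
proof (rule period_max_eq_0[OF _ assms(1)])
  fix x assume x: "x \<in> {real_of_int k * L .. real_of_int k * L + L}"
  have "- real N \<le> real_of_int k" "real_of_int k + 1 \<le> real N" using assms(2) by auto
  then have "- real N * L \<le> real_of_int k * L" "(real_of_int k + 1) * L \<le> real N * L"
    using mult_right_mono[of "- real N" "real_of_int k" L]
      mult_right_mono[of "real_of_int k + 1" "real N" L] assms(1) by simp_all
  with x have "\<bar>x\<bar> \<le> real N * L" by (simp add: abs_le_iff distrib_right)
  then show "f x * (1 - cutoff (real N * L) x) = 0" by (simp add: cutoff_eq_1)
qed

lemma tendsto_period_max_tail:
  fixes f :: "real \<Rightarrow> real"
  assumes L: "L > 0" and f: "continuous_on UNIV f"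
    and summable: "period_max L f summable_on UNIV"
  shows "(\<lambda>N. \<Sum>\<^sub>\<infinity>k. period_max L (\<lambda>x. f x * (1 - cutoff (real N * L) x)) k) \<longlonglongrightarrow> 0"
proof -
  define S where "S = (\<Sum>\<^sub>\<infinity>k. period_max L f k)"
  define W where "W N = {-int N..<int N}" for N
  define g where "g N x = f x * (1 - cutoff (real N * L) x)" for N x
  have g_cont: "continuous_on UNIV (g N)" for N
    unfolding g_def by (intro continuous_intros f)
  have g_le: "\<bar>g N x\<bar> \<le> \<bar>f x\<bar>" for N x
    unfolding g_def by (rule abs_mult_one_minus_cutoff_le)
  have tail_le: "(\<Sum>\<^sub>\<infinity>k. period_max L (g N) k) \<le> S - sum (period_max L f) (W N)" for N
  proof (rule has_sum_mono)
    show "(period_max L (g N) has_sum (\<Sum>\<^sub>\<infinity>k. period_max L (g N) k)) (UNIV - W N)"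
      using summable_period_max_mono(1)[OF f g_cont g_le _ summable] L
        period_max_one_minus_cutoff_eq_0[of L _ N f]
      by (intro has_sum_cong_neutral[THEN iffD1, OF _ _ _ has_sum_infsum]) (auto simp: g_def[abs_def] W_def)
    show "(period_max L f has_sum S - sum (period_max L f) (W N)) (UNIV - W N)"
      unfolding S_def W_def using summable by (intro has_sum_Diff) auto
    show "period_max L (g N) k \<le> period_max L f k" for k
      using f g_le L by (intro period_max_mono) auto
  qed
  have tail_nonneg: "(\<Sum>\<^sub>\<infinity>k. period_max L (g N) k) \<ge> 0" for N
    using g_cont L by (intro infsum_nonneg period_max_nonneg) auto
  have "(sum (period_max L f) \<longlongrightarrow> S) (finite_subsets_at_top UNIV)"
    using summable unfolding S_def summable_iff_has_sum_infsum has_sum_def .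
  then have "(\<lambda>N. sum (period_max L f) (W N)) \<longlonglongrightarrow> S"
    unfolding W_def by (rule filterlim_compose[OF _ filterlim_int_symmetric_intervals])
  then have "(\<lambda>N. S - sum (period_max L f) (W N)) \<longlonglongrightarrow> S - S"
    by (intro tendsto_diff tendsto_const)
  with tail_le tail_nonneg have "(\<lambda>N. \<Sum>\<^sub>\<infinity>k. period_max L (g N) k) \<longlonglongrightarrow> 0"
    using tendsto_sandwich[of "\<lambda>_. 0" "\<lambda>N. \<Sum>\<^sub>\<infinity>k. period_max L (g N) k" sequentially
        "\<lambda>N. S - sum (period_max L f) (W N)" 0] by simp
  then show ?thesis by (simp add: g_def[abs_def])
qed

section \<open>Uniform bounds for densities in Lambda\<close>

lemma Lambda_continuous:
  assumes "b \<in> Lambda L \<alpha>"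
  shows "continuous_on S b"
proof -
  obtain b' where "\<And>x. (b has_real_derivative b' x) (at x)"
    using assms unfolding Lambda_def C1_fun_def by blast
  then show ?thesis by (intro continuous_at_imp_continuous_on ballI DERIV_isCont)
qed

lemma Lambda_nonneg: "b \<in> Lambda L \<alpha> \<Longrightarrow> b x \<ge> 0"
  unfolding Lambda_def by blast

lemma Lambda_periodic:
  assumes "b \<in> Lambda L \<alpha>"
  shows "b (x + real_of_int k * L) = b x"
proof -
  have step: "b (x + L) = b x" for x using assms unfolding Lambda_def by blast
  show ?thesis
  proof (induction k arbitrary: x rule: int_induct[where k = 0])
    case (step1 i)
    then show ?case using step[of "x + real_of_int i * L"] by (simp add: algebra_simps)
  next
    case (step2 i)
    then show ?case using step2(2)[of "x - L"] step[of "x - L"] by (simp add: algebra_simps)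
  qed simp
qed

lemma Lambda_mean_nonneg:
  assumes "b \<in> Lambda L \<alpha>" and "L \<ge> 0"
  shows "\<alpha> * L \<ge> 0"
proof -
  have "integral {0..L} b = \<alpha> * L" using assms(1) unfolding Lambda_def by blast
  moreover have "integral {0..L} b \<ge> 0"
    using assms(1) by (intro integral_nonneg integrable_continuous_interval Lambda_continuous
        Lambda_nonneg)
  ultimately show ?thesis by simp
qed

lemma Lambda_period_max_bound_nonneg:
  assumes "b \<in> Lambda L \<alpha>" and "L \<ge> 0" and "continuous_on UNIV f"
  shows "\<alpha> * L * (\<Sum>\<^sub>\<infinity>k. period_max L f k) \<ge> 0"
  using Lambda_mean_nonneg[OF assms(1,2)] period_max_nonneg[OF assms(3,2)]
  by (intro mult_nonneg_nonneg[OF _ infsum_nonneg]) auto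

lemma nn_integral_Lambda_period:
  assumes "b \<in> Lambda L \<alpha>"
  shows "(\<integral>\<^sup>+x. ennreal (b x * indicator {real_of_int k * L .. real_of_int k * L + L} x) \<partial>lborel)
    = ennreal (\<alpha> * L)"
proof -
  define a where "a = real_of_int k * L"
  have "integral {0..L} b = \<alpha> * L" using assms unfolding Lambda_def by blast
  then have "(b has_integral \<alpha> * L) {0..L}"
    using integrable_integral[OF integrable_continuous_interval[OF Lambda_continuous[OF assms]],
        of 0 L] by simp
  moreover have "b \<circ> (+) a = b"
    using Lambda_periodic[OF assms] by (simp add: a_def fun_eq_iff add.commute)
  ultimately have "(b has_integral \<alpha> * L) {a..a + L}"
    using has_integral_shift_Icc_real[of b a "\<alpha> * L" 0 L] by (simp add: add.commute)
  then have "((\<lambda>x. if x \<in> {a..a + L} then b x else 0) has_integral \<alpha> * L) UNIV"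
    by (simp only: has_integral_restrict_UNIV)
  moreover have "(\<lambda>x. if x \<in> {a..a + L} then b x else 0) = (\<lambda>x. b x * indicator {a..a + L} x)"
    by (auto simp: indicator_def)
  ultimately have "((\<lambda>x. b x * indicator {a..a + L} x) has_integral \<alpha> * L) UNIV" by simp
  moreover have [measurable]: "b \<in> borel_measurable borel"
    by (rule borel_measurable_continuous_onI[OF Lambda_continuous[OF assms]])
  ultimately show ?thesis
    unfolding a_def[symmetric]
    by (intro nn_integral_has_integral_lborel) (measurable, simp add: Lambda_nonneg[OF assms])
qed

lemma nn_integral_Lambda_mult_window_le:
  fixes f :: "real \<Rightarrow> real"
  assumes b: "b \<in> Lambda L \<alpha>" and L: "L > 0" and f: "continuous_on UNIV f"
  shows "(\<integral>\<^sup>+x. ennreal (b x * \<bar>f x\<bar> * indicator {- (real N * L)..<real N * L} x) \<partial>lborel)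
    \<le> ennreal (\<alpha> * L * (\<Sum>k\<in>{-int N..<int N}. period_max L f k))"
proof -
  define I where "I k = {real_of_int k * L .. real_of_int k * L + L}" for k
  have [measurable]: "b \<in> borel_measurable borel"
    by (rule borel_measurable_continuous_onI[OF Lambda_continuous[OF b]])
  have "ennreal (b x * \<bar>f x\<bar> * indicator {- (real N * L)..<real N * L} x)
      \<le> (\<Sum>k\<in>{-int N..<int N}. ennreal (period_max L f k) * ennreal (b x * indicator (I k) x))"
    for x
  proof (cases "x \<in> {- (real N * L)..<real N * L}")
    case True
    define k where "k = \<lfloor>x / L\<rfloor>"
    have "x \<in> I k"
      using floor_divide_lower[OF L, of x] floor_divide_upper[OF L, of x]
      by (simp add: I_def k_def algebra_simps)
    moreover have "k \<in> {-int N..<int N}"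
      using True L by (simp add: k_def le_floor_iff floor_less_iff field_simps)
    ultimately have "b x * \<bar>f x\<bar> \<le> period_max L f k * (b x * indicator (I k) x)"
      using abs_le_period_max[OF f, of x k L] Lambda_nonneg[OF b, of x]
      by (simp add: I_def mult.commute mult_left_mono)
    then have "ennreal (b x * \<bar>f x\<bar> * indicator {- (real N * L)..<real N * L} x)
        \<le> ennreal (period_max L f k) * ennreal (b x * indicator (I k) x)"
      using True period_max_nonneg[OF f, of L k] L by (simp add: ennreal_mult'[symmetric] ennreal_leI)
    also have "\<dots> \<le> (\<Sum>k\<in>{-int N..<int N}. ennreal (period_max L f k) * ennreal (b x * indicator (I k) x))"
      using \<open>k \<in> {-int N..<int N}\<close> by (intro member_le_sum) auto
    finally show ?thesis .
  next
    case False
    then show ?thesis by simp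
  qed
  then have "(\<integral>\<^sup>+x. ennreal (b x * \<bar>f x\<bar> * indicator {- (real N * L)..<real N * L} x) \<partial>lborel)
      \<le> (\<integral>\<^sup>+x. (\<Sum>k\<in>{-int N..<int N}. ennreal (period_max L f k) *
            ennreal (b x * indicator (I k) x)) \<partial>lborel)"
    by (rule nn_integral_mono)
  also have "\<dots> = (\<Sum>k\<in>{-int N..<int N}. ennreal (period_max L f k) *
      (\<integral>\<^sup>+x. ennreal (b x * indicator (I k) x) \<partial>lborel))"
    by (subst nn_integral_sum) (auto intro!: sum.cong nn_integral_cmult simp: I_def)
  also have "\<dots> = ennreal (\<alpha> * L * (\<Sum>k\<in>{-int N..<int N}. period_max L f k))"
    using nn_integral_Lambda_period[OF b] period_max_nonneg[OF f] Lambda_mean_nonneg[OF b] L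
    by (simp add: I_def ennreal_mult'[symmetric] sum_distrib_left mult.commute sum_nonneg)
  finally show ?thesis .
qed

lemma nn_integral_Lambda_mult_le:
  fixes f :: "real \<Rightarrow> real"
  assumes b: "b \<in> Lambda L \<alpha>" and L: "L > 0" and f: "continuous_on UNIV f"
    and summable: "period_max L f summable_on UNIV"
  shows "(\<integral>\<^sup>+x. ennreal (b x * \<bar>f x\<bar>) \<partial>lborel) \<le> ennreal (\<alpha> * L * (\<Sum>\<^sub>\<infinity>k. period_max L f k))"
proof (rule nn_integral_le_of_eventually_eq)
  have [measurable]: "b \<in> borel_measurable borel" "f \<in> borel_measurable borel"
    using Lambda_continuous[OF b] f by (auto intro: borel_measurable_continuous_onI)
  show "(\<lambda>x. ennreal (b x * \<bar>f x\<bar> * indicator {- (real N * L)..<real N * L} x))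
      \<in> borel_measurable lborel" for N
    by measurable
  show "eventually (\<lambda>N. ennreal (b x * \<bar>f x\<bar> * indicator {- (real N * L)..<real N * L} x)
      = ennreal (b x * \<bar>f x\<bar>)) sequentially" for x
    using eventually_abs_less_real_mult[OF L, of x]
    by eventually_elim (auto simp: indicator_def abs_less_iff)
  show "(\<integral>\<^sup>+x. ennreal (b x * \<bar>f x\<bar> * indicator {- (real N * L)..<real N * L} x) \<partial>lborel)
      \<le> ennreal (\<alpha> * L * (\<Sum>\<^sub>\<infinity>k. period_max L f k))" for N
  proof -
    have "(\<Sum>k\<in>{-int N..<int N}. period_max L f k) \<le> (\<Sum>\<^sub>\<infinity>k. period_max L f k)"
      using f L by (intro finite_sum_le_infsum[OF summable] period_max_nonneg) auto
    then have "\<alpha> * L * (\<Sum>k\<in>{-int N..<int N}. period_max L f k) \<le> \<alpha> * L * (\<Sum>\<^sub>\<infinity>k. period_max L f k)"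
      using Lambda_mean_nonneg[OF b] L by (intro mult_left_mono) auto
    then show ?thesis
      using nn_integral_Lambda_mult_window_le[OF b L f, of N] by (auto intro: order_trans ennreal_leI)
  qed
qed

lemma Lambda_mult_integrable_and_bound:
  fixes f :: "real \<Rightarrow> real"
  assumes b: "b \<in> Lambda L \<alpha>" and L: "L > 0" and f: "continuous_on UNIV f"
    and summable: "period_max L f summable_on UNIV"
  shows "integrable lborel (\<lambda>x. b x * f x)"
    and "\<bar>LINT x|lborel. b x * f x\<bar> \<le> \<alpha> * L * (\<Sum>\<^sub>\<infinity>k. period_max L f k)"
proof -
  have [measurable]: "b \<in> borel_measurable borel" "f \<in> borel_measurable borel"
    using Lambda_continuous[OF b] f by (auto intro: borel_measurable_continuous_onI)
  have abs_eq: "\<bar>b x * f x\<bar> = b x * \<bar>f x\<bar>" for x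
    using Lambda_nonneg[OF b, of x] by (simp add: abs_mult)
  note bound = nn_integral_Lambda_mult_le[OF assms]
  show int: "integrable lborel (\<lambda>x. b x * f x)"
    using bound by (intro integrableI_bounded) (auto simp: abs_eq top.not_eq_extremum le_less_trans)
  have "ennreal (LINT x|lborel. b x * \<bar>f x\<bar>) = (\<integral>\<^sup>+x. ennreal (b x * \<bar>f x\<bar>) \<partial>lborel)"
    using int Lambda_nonneg[OF b]
    by (intro nn_integral_eq_integral[symmetric]) (auto simp: abs_eq[symmetric])
  then have "ennreal (LINT x|lborel. b x * \<bar>f x\<bar>) \<le> ennreal (\<alpha> * L * (\<Sum>\<^sub>\<infinity>k. period_max L f k))"
    using bound by simp
  moreover have "0 \<le> \<alpha> * L * (\<Sum>\<^sub>\<infinity>k. period_max L f k)"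
    using Lambda_period_max_bound_nonneg[OF b _ f] L by simp
  ultimately have "(LINT x|lborel. b x * \<bar>f x\<bar>) \<le> \<alpha> * L * (\<Sum>\<^sub>\<infinity>k. period_max L f k)"
    by simp
  moreover have "\<bar>LINT x|lborel. b x * f x\<bar> \<le> (LINT x|lborel. b x * \<bar>f x\<bar>)"
    using integral_abs_bound[of lborel "\<lambda>x. b x * f x"] by (simp add: abs_eq)
  ultimately show "\<bar>LINT x|lborel. b x * f x\<bar> \<le> \<alpha> * L * (\<Sum>\<^sub>\<infinity>k. period_max L f k)" by linarith
qed

section \<open>Weak-* limits\<close>

lemma weak_star_conv_compact_support:
  fixes g :: "real \<Rightarrow> real"
  assumes conv: "weak_star_conv b M"
    and b: "\<And>n. continuous_on UNIV (b n)" and b_nonneg: "\<And>n x. b n x \<ge> 0"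
    and sets_M: "sets M = sets borel"
    and g: "continuous_on UNIV g" and g0: "\<And>x. R < \<bar>x\<bar> \<Longrightarrow> g x = 0"
  shows "integrable M g" and "(\<lambda>n. LINT x|lborel. b n x * g x) \<longlonglongrightarrow> (LINT x|M. g x)"
proof -
  have test_conv: "integrable M \<phi>" "(\<lambda>n. LINT x|lborel. b n x * \<phi> x) \<longlonglongrightarrow> (LINT x|M. \<phi> x)"
    if "test_fun \<phi>" for \<phi>
    using conv that unfolding weak_star_conv_def by blast+
  have int_lborel: "integrable lborel (\<lambda>x. b n x * h x)"
    if "continuous_on UNIV h" "\<And>x. S < \<bar>x\<bar> \<Longrightarrow> h x = 0" for h S n
    using that by (intro integrable_compact_support[of _ S] continuous_on_mult b) auto
  have int_lborel_test: "integrable lborel (\<lambda>x. b n x * \<phi> x)" if \<phi>: "test_fun \<phi>" for \<phi> n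
  proof -
    obtain S where "\<And>x. S < \<bar>x\<bar> \<Longrightarrow> \<phi> x = 0" using test_fun_vanishes[OF \<phi>] by blast
    then show ?thesis by (rule int_lborel[OF test_fun_continuous[OF \<phi>]])
  qed
  define \<psi> where "\<psi> = bump (R + 1)"
  define \<epsilon> where "\<epsilon> N = inverse (real (Suc N))" for N
  have "\<forall>N. \<exists>\<phi>. test_fun \<phi> \<and> (\<forall>x. \<bar>g x - \<phi> x\<bar> \<le> \<epsilon> N * \<psi> x)"
  proof
    fix N
    have "\<epsilon> N > 0" by (simp add: \<epsilon>_def)
    obtain \<phi> where "test_fun \<phi>" "\<And>x. \<bar>g x - \<phi> x\<bar> \<le> \<epsilon> N * bump (R + 1) x"
      using test_fun_approximation[OF g g0 \<open>\<epsilon> N > 0\<close>] by blast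
    then show "\<exists>\<phi>. test_fun \<phi> \<and> (\<forall>x. \<bar>g x - \<phi> x\<bar> \<le> \<epsilon> N * \<psi> x)"
      unfolding \<psi>_def by blast
  qed
  from choice[OF this] obtain \<phi> where "\<forall>N. test_fun (\<phi> N) \<and> (\<forall>x. \<bar>g x - \<phi> N x\<bar> \<le> \<epsilon> N * \<psi> x)"
    by blast
  then have \<phi>: "\<And>N. test_fun (\<phi> N)" "\<And>N x. \<bar>g x - \<phi> N x\<bar> \<le> \<epsilon> N * \<psi> x" by blast+
  have \<psi>: "test_fun \<psi>" "\<And>x. \<psi> x \<ge> 0" by (simp_all add: \<psi>_def test_fun_bump bump_nonneg)
  have g_meas: "g \<in> borel_measurable M"
    using g by (simp add: measurable_cong_sets[OF sets_M refl] borel_measurable_continuous_onI)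
  show gM: "integrable M g"
  proof (rule Bochner_Integration.integrable_bound[OF _ g_meas])
    show "integrable M (\<lambda>x. \<bar>\<phi> 0 x\<bar> + \<psi> x)"
      using test_conv(1)[OF \<phi>(1)] test_conv(1)[OF \<psi>(1)] by auto
    show "AE x in M. norm (g x) \<le> norm (\<bar>\<phi> 0 x\<bar> + \<psi> x)"
    proof (intro AE_I2)
      fix x
      show "norm (g x) \<le> norm (\<bar>\<phi> 0 x\<bar> + \<psi> x)"
        using \<phi>(2)[of x 0] \<psi>(2)[of x] by (simp add: \<epsilon>_def)
    qed
  qed
  define C where "C = (LINT x|M. \<psi> x)"
  have "C \<ge> 0" unfolding C_def using \<psi>(2) by (intro integral_nonneg_AE) simp
  show "(\<lambda>n. LINT x|lborel. b n x * g x) \<longlonglongrightarrow> (LINT x|M. g x)"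
  proof (rule LIMSEQ_of_approximations)
    fix N
    show "(\<lambda>n. LINT x|lborel. b n x * \<phi> N x) \<longlonglongrightarrow> (LINT x|M. \<phi> N x)"
      by (rule test_conv(2)[OF \<phi>(1)])
    have "\<bar>(LINT x|M. g x) - (LINT x|M. \<phi> N x)\<bar> \<le> (LINT x|M. \<epsilon> N * \<psi> x)"
      using test_conv(1)[OF \<psi>(1)] \<phi>(2)
      by (intro abs_integral_diff_le[OF gM test_conv(1)[OF \<phi>(1)]]) auto
    also have "\<dots> \<le> \<epsilon> N * (C + 1)"
      using \<open>C \<ge> 0\<close> by (simp add: C_def \<epsilon>_def)
    finally show "\<bar>(LINT x|M. g x) - (LINT x|M. \<phi> N x)\<bar> \<le> \<epsilon> N * (C + 1)" .
    have "eventually (\<lambda>n. (LINT x|lborel. b n x * \<psi> x) < C + 1) sequentially"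
      using order_tendstoD(2)[OF test_conv(2)[OF \<psi>(1)]] by (simp add: C_def)
    then show "eventually (\<lambda>n. \<bar>(LINT x|lborel. b n x * g x) - (LINT x|lborel. b n x * \<phi> N x)\<bar>
        \<le> \<epsilon> N * (C + 1)) sequentially"
    proof eventually_elim
      case (elim n)
      have "\<bar>b n x * g x - b n x * \<phi> N x\<bar> \<le> \<epsilon> N * (b n x * \<psi> x)" for x
        using mult_left_mono[OF \<phi>(2)[of x N] b_nonneg[of n x]]
        by (simp add: abs_mult b_nonneg right_diff_distrib[symmetric] mult.left_commute)
      then have "\<bar>(LINT x|lborel. b n x * g x) - (LINT x|lborel. b n x * \<phi> N x)\<bar>
          \<le> (LINT x|lborel. \<epsilon> N * (b n x * \<psi> x))"
        using int_lborel_test[OF \<psi>(1)]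
        by (intro abs_integral_diff_le[OF int_lborel[OF g g0] int_lborel_test[OF \<phi>(1)]]) auto
      also have "\<dots> \<le> \<epsilon> N * (C + 1)"
        using elim by (simp add: \<epsilon>_def)
      finally show ?case .
    qed
  next
    show "(\<lambda>N. \<epsilon> N * (C + 1)) \<longlonglongrightarrow> 0"
      unfolding \<epsilon>_def by (intro tendsto_mult_left_zero LIMSEQ_inverse_real_of_nat)
  qed
qed

context
  fixes L \<alpha> :: real and b :: "nat \<Rightarrow> real \<Rightarrow> real" and M :: "real measure"
  assumes L: "L > 0" and b: "\<And>n. b n \<in> Lambda L \<alpha>"
    and sets_M: "sets M = sets borel" and conv: "weak_star_conv b M"
begin

lemma continuous_imp_measurable_M: "continuous_on UNIV f \<Longrightarrow> f \<in> borel_measurable M"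
  by (simp add: measurable_cong_sets[OF sets_M refl] borel_measurable_continuous_onI)

lemma weak_star_conv_cutoff:
  fixes f :: "real \<Rightarrow> real"
  assumes f: "continuous_on UNIV f"
  shows "integrable M (\<lambda>x. f x * cutoff r x)"
    and "(\<lambda>n. LINT x|lborel. b n x * (f x * cutoff r x)) \<longlonglongrightarrow> (LINT x|M. f x * cutoff r x)"
proof -
  have "f x * cutoff r x = 0" if "r + 1 < \<bar>x\<bar>" for x
    using that by (simp add: cutoff_eq_0)
  note compact_conv = weak_star_conv_compact_support[OF conv Lambda_continuous[OF b] Lambda_nonneg[OF b]
      sets_M continuous_on_mult[OF f continuous_on_cutoff] this]
  show "integrable M (\<lambda>x. f x * cutoff r x)" by (rule compact_conv(1))
  show "(\<lambda>n. LINT x|lborel. b n x * (f x * cutoff r x)) \<longlonglongrightarrow> (LINT x|M. f x * cutoff r x)"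
    by (rule compact_conv(2))
qed

lemma weak_star_limit_abs_integral_le:
  fixes f :: "real \<Rightarrow> real"
  assumes f: "continuous_on UNIV f" and summable: "period_max L f summable_on UNIV"
  shows "integrable M f" and "(LINT x|M. \<bar>f x\<bar>) \<le> \<alpha> * L * (\<Sum>\<^sub>\<infinity>k. period_max L f k)"
proof -
  define B where "B = \<alpha> * L * (\<Sum>\<^sub>\<infinity>k. period_max L f k)"
  have "B \<ge> 0" unfolding B_def using Lambda_period_max_bound_nonneg[OF b _ f] L by simp
  define h where "h N x = \<bar>f x\<bar> * cutoff (real N * L) x" for N x
  have abs_f: "continuous_on UNIV (\<lambda>x. \<bar>f x\<bar>)" using f by (intro continuous_intros)
  have h_cont: "continuous_on UNIV (h N)" for N
    unfolding h_def[abs_def] by (intro continuous_intros abs_f)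
  have h_le: "\<bar>h N x\<bar> \<le> \<bar>f x\<bar>" for N x
    using abs_mult_cutoff_le[of "\<lambda>x. \<bar>f x\<bar>"] by (simp add: h_def)
  have h_M: "integrable M (h N)" for N
    unfolding h_def by (rule weak_star_conv_cutoff(1)[OF abs_f])
  have "(LINT x|M. h N x) \<le> B" for N
  proof (rule tendsto_upperbound)
    show "(\<lambda>n. LINT x|lborel. b n x * h N x) \<longlonglongrightarrow> (LINT x|M. h N x)"
      unfolding h_def by (rule weak_star_conv_cutoff(2)[OF abs_f])
    note h_summable = summable_period_max_mono[OF f h_cont h_le less_imp_le[OF L] summable]
    have "(LINT x|lborel. b n x * h N x) \<le> B" for n
    proof -
      have "(LINT x|lborel. b n x * h N x) \<le> \<alpha> * L * (\<Sum>\<^sub>\<infinity>k. period_max L (h N) k)"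
        by (rule abs_le_D1[OF Lambda_mult_integrable_and_bound(2)[OF b L h_cont h_summable(1)]])
      also have "\<dots> \<le> B"
        unfolding B_def using h_summable(2) Lambda_mean_nonneg[OF b] L by (intro mult_left_mono) auto
      finally show ?thesis .
    qed
    then show "eventually (\<lambda>n. (LINT x|lborel. b n x * h N x) \<le> B) sequentially" by simp
  qed simp
  moreover have "(\<integral>\<^sup>+x. ennreal (h N x) \<partial>M) = ennreal (LINT x|M. h N x)" for N
    by (rule nn_integral_eq_integral[OF h_M]) (simp add: h_def cutoff_nonneg)
  ultimately have nn_h: "(\<integral>\<^sup>+x. ennreal (h N x) \<partial>M) \<le> ennreal B" for N
    by (simp add: ennreal_leI)
  have nn_f: "(\<integral>\<^sup>+x. ennreal \<bar>f x\<bar> \<partial>M) \<le> ennreal B"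
  proof (rule nn_integral_le_of_eventually_eq[OF _ _ nn_h])
    show "(\<lambda>x. ennreal (h N x)) \<in> borel_measurable M" for N
      using continuous_imp_measurable_M[OF h_cont] by measurable
    show "eventually (\<lambda>N. ennreal (h N x) = ennreal \<bar>f x\<bar>) sequentially" for x
      using eventually_abs_less_real_mult[OF L, of x]
      by eventually_elim (simp add: h_def cutoff_eq_1)
  qed
  have f_M: "f \<in> borel_measurable M" by (rule continuous_imp_measurable_M[OF f])
  show "integrable M f"
    using nn_f f_M by (intro integrableI_bounded) (auto simp: top.not_eq_extremum le_less_trans)
  then have "ennreal (LINT x|M. \<bar>f x\<bar>) = (\<integral>\<^sup>+x. ennreal \<bar>f x\<bar> \<partial>M)"
    by (intro nn_integral_eq_integral[symmetric]) auto
  with nn_f have "ennreal (LINT x|M. \<bar>f x\<bar>) \<le> ennreal B" by simp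
  with \<open>B \<ge> 0\<close> show "(LINT x|M. \<bar>f x\<bar>) \<le> \<alpha> * L * (\<Sum>\<^sub>\<infinity>k. period_max L f k)"
    unfolding B_def by simp
qed

lemma weak_star_conv_summable_period_max:
  fixes f :: "real \<Rightarrow> real"
  assumes f: "continuous_on UNIV f" and summable: "period_max L f summable_on UNIV"
  shows "(\<lambda>n. LINT x|lborel. b n x * f x) \<longlonglongrightarrow> (LINT x|M. f x)"
proof -
  define \<kappa> where "\<kappa> N = cutoff (real N * L)" for N
  define g where "g N x = f x * (1 - \<kappa> N x)" for N x
  have g_cont: "continuous_on UNIV (g N)" for N
    unfolding g_def \<kappa>_def by (intro continuous_intros f)
  have f\<kappa>_cont: "continuous_on UNIV (\<lambda>x. f x * \<kappa> N x)" for N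
    unfolding \<kappa>_def by (intro continuous_intros f)
  have g_summable: "period_max L (g N) summable_on UNIV" for N
    using g_cont[of N] L unfolding g_def \<kappa>_def
    by (intro summable_period_max_mono(1)[OF f _ abs_mult_one_minus_cutoff_le[where f = f and r = "real N * L"] _ summable]) auto
  have f\<kappa>_summable: "period_max L (\<lambda>x. f x * \<kappa> N x) summable_on UNIV" for N
    using f\<kappa>_cont[of N] L unfolding \<kappa>_def
    by (intro summable_period_max_mono(1)[OF f _ abs_mult_cutoff_le[where f = f and r = "real N * L"] _ summable]) auto
  show ?thesis
  proof (rule LIMSEQ_of_approximations[where e = "\<lambda>N. \<alpha> * L * (\<Sum>\<^sub>\<infinity>k. period_max L (g N) k)"])
    fix N
    show "(\<lambda>n. LINT x|lborel. b n x * (f x * \<kappa> N x)) \<longlonglongrightarrow> (LINT x|M. f x * \<kappa> N x)"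
      unfolding \<kappa>_def by (rule weak_star_conv_cutoff(2)[OF f])
    show "eventually (\<lambda>n. \<bar>(LINT x|lborel. b n x * f x) - (LINT x|lborel. b n x * (f x * \<kappa> N x))\<bar>
        \<le> \<alpha> * L * (\<Sum>\<^sub>\<infinity>k. period_max L (g N) k)) sequentially"
    proof (intro always_eventually allI)
      fix n
      have "(LINT x|lborel. b n x * f x) - (LINT x|lborel. b n x * (f x * \<kappa> N x))
          = (LINT x|lborel. b n x * f x - b n x * (f x * \<kappa> N x))"
        by (intro Bochner_Integration.integral_diff[symmetric]
            Lambda_mult_integrable_and_bound(1)[OF b L] f f\<kappa>_cont summable f\<kappa>_summable)
      also have "\<dots> = (LINT x|lborel. b n x * g N x)"
        by (simp add: g_def algebra_simps)
      finally show "\<bar>(LINT x|lborel. b n x * f x) - (LINT x|lborel. b n x * (f x * \<kappa> N x))\<bar>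
          \<le> \<alpha> * L * (\<Sum>\<^sub>\<infinity>k. period_max L (g N) k)"
        using Lambda_mult_integrable_and_bound(2)[OF b L g_cont g_summable] by simp
    qed
    have "(LINT x|M. f x) - (LINT x|M. f x * \<kappa> N x) = (LINT x|M. f x - f x * \<kappa> N x)"
      unfolding \<kappa>_def
      by (intro Bochner_Integration.integral_diff[symmetric] weak_star_limit_abs_integral_le(1)
          weak_star_conv_cutoff(1) f summable)
    also have "\<dots> = (LINT x|M. g N x)"
      by (simp add: g_def right_diff_distrib)
    also have "\<bar>\<dots>\<bar> \<le> (LINT x|M. \<bar>g N x\<bar>)" by (rule integral_abs_bound)
    also have "\<dots> \<le> \<alpha> * L * (\<Sum>\<^sub>\<infinity>k. period_max L (g N) k)"
      by (rule weak_star_limit_abs_integral_le(2)[OF g_cont g_summable])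
    finally show "\<bar>(LINT x|M. f x) - (LINT x|M. f x * \<kappa> N x)\<bar>
        \<le> \<alpha> * L * (\<Sum>\<^sub>\<infinity>k. period_max L (g N) k)" .
  next
    show "(\<lambda>N. \<alpha> * L * (\<Sum>\<^sub>\<infinity>k. period_max L (g N) k)) \<longlonglongrightarrow> 0"
      unfolding g_def \<kappa>_def by (intro tendsto_mult_right_zero tendsto_period_max_tail L f summable)
  qed
qed

end

theorem mainTheorem13:
  fixes L \<alpha> :: real and b :: "nat \<Rightarrow> real \<Rightarrow> real" and M :: "real measure"
    and \<eta> :: "real \<Rightarrow> real"
  assumes "L > 0" and "\<alpha> > 0"
    and "\<forall>n. b n \<in> Lambda L \<alpha>"
    and "M \<in> Lambda_bar L \<alpha>"
    and "weak_star_conv b M"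
    and "continuous_on UNIV \<eta>"
    and "(\<lambda>k::int. Sup ((\<lambda>x. \<bar>\<eta> (x + real_of_int k * L)\<bar>) ` {0..L})) summable_on UNIV"
  shows "integrable M \<eta> \<and>
         (\<forall>n. integrable lborel (\<lambda>x. b n x * \<eta> x)) \<and>
         ((\<lambda>n. LINT x|lborel. b n x * \<eta> x) \<longlonglongrightarrow> (LINT x|M. \<eta> x)) \<and>
         ((LINT x|M. \<bar>\<eta> x\<bar>) \<le>
           \<alpha> * L * (\<Sum>\<^sub>\<infinity>k::int. Sup ((\<lambda>x. \<bar>\<eta> (x + real_of_int k * L)\<bar>) ` {0..L})))"
proof -
  note L = \<open>L > 0\<close> and \<eta> = \<open>continuous_on UNIV \<eta>\<close> and conv = \<open>weak_star_conv b M\<close>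
  have b: "b n \<in> Lambda L \<alpha>" for n using assms(3) by blast
  have sets_M: "sets M = sets borel" using assms(4) unfolding Lambda_bar_def by blast
  have period_max_eq: "(\<lambda>k. Sup ((\<lambda>x. \<bar>\<eta> (x + real_of_int k * L)\<bar>) ` {0..L})) = period_max L \<eta>"
    by (simp add: fun_eq_iff period_max_def)
  have summable: "period_max L \<eta> summable_on UNIV" using assms(7) by (simp only: period_max_eq)
  show ?thesis
    unfolding period_max_eq
    using Lambda_mult_integrable_and_bound(1)[OF b L \<eta> summable]
      weak_star_limit_abs_integral_le[OF L b sets_M conv \<eta> summable]
      weak_star_conv_summable_period_max[OF L b sets_M conv \<eta> summable]
    by blast
qed

end
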